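(* Let $S_1,\ldots,S_k$ be measurable subsets of $[0,\infty)$ with positive Lebesgue measure, ordered in the sense that for any $x\in S_i$ and $y\in S_j$ with $i<j$, $x<y$ holds almost surely. Let $w$ be a measurable function that does not change its sign inside each $S_j$, and assume $\int_{S_j}w(x)\,dx\ne0$ for each $j$ (all integrals below being finite). Then the $k\times k$ matrix $\mathrm M$ with entries $\mathrm M_{ij}=\int_{S_j}w(x)x^{2(i-1)}\,dx$, $i,j=1,\ldots,k$, is non-singular. *)

theory Defs
  imports "HOL-Analysis.Analysis" "Jordan_Normal_Form.Determinant"
begin

end

theory Submission
  imports Defs
begin

text \<open>If the matrix were singular, a nonzero even polynomial q(x) = sum c_i x^(2i) with i < k would
  satisfy int_{S_j} w q = 0 for every j. Since q has finitely many roots and int_{S_j} w is nonzero,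
  w q is not a.e. zero on S_j; having integral zero, it takes both signs on every co-null part of S_j,
  and as w does not change sign there, so does q. Hence q has a root strictly between two points of S_j,
  and choosing these points one set after the other, outside the null sets where the ordering fails,
  yields roots 0 < r_1 < ... < r_k. Then the r_j^2 are k distinct roots of the nonzero polynomial
  sum c_i y^i of degree below k, which is impossible.\<close>

lemma set_integrable_sum:
  fixes f :: "'i \<Rightarrow> 'a \<Rightarrow> 'b::{banach, second_countable_topology}"
  assumes "\<And>i. i \<in> I \<Longrightarrow> set_integrable M A (f i)"
  shows "set_integrable M A (\<lambda>x. \<Sum>i\<in>I. f i x)"
  using assms unfolding set_integrable_def by (simp add: scaleR_sum_right)

lemma set_integral_sum:
  fixes f :: "'i \<Rightarrow> 'a \<Rightarrow> 'b::{banach, second_countable_topology}"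
  assumes "\<And>i. i \<in> I \<Longrightarrow> set_integrable M A (f i)"
  shows "(LINT x:A|M. \<Sum>i\<in>I. f i x) = (\<Sum>i\<in>I. LINT x:A|M. f i x)"
  using assms unfolding set_integrable_def set_lebesgue_integral_def
  by (simp add: scaleR_sum_right)

lemma set_integral_eq_0_imp_pos_point:
  fixes h :: "'a \<Rightarrow> real"
  assumes h: "set_integrable M A h" and h0: "(LINT x:A|M. h x) = 0"
    and not_null: "\<not> (AE x in M. x \<in> A \<longrightarrow> h x = 0)"
    and P: "AE x in M. x \<in> A \<longrightarrow> P x"
  shows "\<exists>x\<in>A. P x \<and> 0 < h x"
proof (rule ccontr)
  assume no_pos: "\<not> ?thesis"
  from P have "AE x in M. 0 \<le> indicator A x * - h x"
    by eventually_elim (use no_pos in \<open>auto simp: indicator_def not_less\<close>)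
  moreover have "integrable M (\<lambda>x. indicator A x * - h x)"
    using h unfolding set_integrable_def by simp
  moreover have "integral\<^sup>L M (\<lambda>x. indicator A x * - h x) = 0"
    using h0 unfolding set_lebesgue_integral_def by simp
  ultimately have "AE x in M. indicator A x * - h x = 0"
    using integral_nonneg_eq_0_iff_AE by blast
  then have "AE x in M. x \<in> A \<longrightarrow> h x = 0"
    by eventually_elim (auto simp: indicator_def)
  with not_null show False by blast
qed

lemma set_integral_eq_0_imp_neg_point:
  fixes h :: "'a \<Rightarrow> real"
  assumes h: "set_integrable M A h" and h0: "(LINT x:A|M. h x) = 0"
    and not_null: "\<not> (AE x in M. x \<in> A \<longrightarrow> h x = 0)"
    and P: "AE x in M. x \<in> A \<longrightarrow> P x"
  shows "\<exists>x\<in>A. P x \<and> h x < 0"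
  using set_integral_eq_0_imp_pos_point[of M A "\<lambda>x. - h x" P] assms
    set_integrable_mult_right[OF h, of "- 1"]
  by (simp add: set_integral_uminus)

lemma det_eq_0_imp_rows_dependent:
  fixes f :: "nat \<times> nat \<Rightarrow> 'a::idom"
  assumes "det (mat k k f) = 0"
  obtains c i0 where "i0 < k" "c i0 \<noteq> 0" "\<And>j. j < k \<Longrightarrow> (\<Sum>i<k. c i * f (i, j)) = 0"
proof -
  have "det (transpose_mat (mat k k f)) = 0"
    using assms by (subst det_transpose[of _ k]) auto
  then obtain v where v: "v \<in> carrier_vec k" "v \<noteq> 0\<^sub>v k"
    and kernel: "transpose_mat (mat k k f) *\<^sub>v v = 0\<^sub>v k"
    using det_0_iff_vec_prod_zero[of "transpose_mat (mat k k f)" k] by auto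
  obtain i0 where "i0 < k" "v $ i0 \<noteq> 0"
    using v by (metis eq_vecI carrier_vecD index_zero_vec)
  moreover have "(\<Sum>i<k. v $ i * f (i, j)) = 0" if "j < k" for j
  proof -
    have "(transpose_mat (mat k k f) *\<^sub>v v) $ j = 0"
      using kernel that by simp
    then show ?thesis
      using that v(1) by (simp add: scalar_prod_def lessThan_atLeast0 mult.commute)
  qed
  ultimately show ?thesis
    using that[of i0 "\<lambda>i. v $ i"] by blast
qed

lemma poly_from_coeffs:
  fixes c :: "nat \<Rightarrow> 'a::comm_ring_1"
  assumes "i0 < k" "c i0 \<noteq> 0"
  obtains p where "p \<noteq> 0" "degree p < k" "\<And>x. poly p x = (\<Sum>i<k. c i * x ^ i)"
proof
  let ?p = "\<Sum>i<k. monom (c i) i"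
  have "coeff ?p i0 = c i0"
    unfolding coeff_sum coeff_monom using assms(1) by (simp add: sum.delta)
  with assms(2) show "?p \<noteq> 0" by auto
  have "degree ?p \<le> k - 1"
    by (intro degree_sum_le) (auto intro: order.trans[OF degree_monom_le])
  with assms(1) show "degree ?p < k" by linarith
  show "poly ?p x = (\<Sum>i<k. c i * x ^ i)" for x
    by (simp add: poly_sum poly_monom)
qed

lemma poly_inj_roots_le_degree:
  fixes p :: "'a::idom poly"
  assumes "p \<noteq> 0" and "inj_on r {..<k}" and "\<And>j. j < k \<Longrightarrow> poly p (r j) = 0"
  shows "k \<le> degree p"
proof -
  have "k = card (r ` {..<k})"
    using card_image[OF assms(2)] by simp
  also have "\<dots> \<le> card {x. poly p x = 0}"
    using assms(3) by (intro card_mono poly_roots_finite assms(1)) auto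
  also have "\<dots> \<le> degree p"
    by (rule card_poly_roots_bound[OF assms(1)])
  finally show ?thesis .
qed

lemma poly_root_between_points:
  fixes p :: "real poly" and w :: "real \<Rightarrow> real"
  assumes "p \<noteq> 0"
    and integrable: "set_integrable lebesgue A (\<lambda>x. w x * poly p x)"
    and orthogonal: "(LINT x:A|lebesgue. w x * poly p x) = 0"
    and w_nonzero: "(LINT x:A|lebesgue. w x) \<noteq> 0"
    and sign: "(\<forall>x\<in>A. w x \<ge> 0) \<or> (\<forall>x\<in>A. w x \<le> 0)"
    and P: "AE x in lebesgue. x \<in> A \<longrightarrow> P x"
  shows "\<exists>r. poly p r = 0 \<and> (\<exists>u\<in>A. P u \<and> u < r) \<and> (\<exists>v\<in>A. P v \<and> r < v)"
proof -
  have "{x. poly p x = 0} \<in> null_sets lebesgue"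
    using poly_roots_finite[OF \<open>p \<noteq> 0\<close>] by (induction rule: finite_induct) auto
  then have roots_null: "AE x in lebesgue. poly p x \<noteq> 0"
    by (rule AE_not_in[THEN AE_mp]) auto
  have not_null: "\<not> (AE x in lebesgue. x \<in> A \<longrightarrow> w x * poly p x = 0)"
  proof
    assume "AE x in lebesgue. x \<in> A \<longrightarrow> w x * poly p x = 0"
    with roots_null have "AE x in lebesgue. indicator A x *\<^sub>R w x = 0"
      by eventually_elim (auto simp: indicator_def)
    then have "(LINT x:A|lebesgue. w x) = 0"
      unfolding set_lebesgue_integral_def by (rule integral_eq_zero_AE)
    with w_nonzero show False ..
  qed
  obtain u where u: "u \<in> A" "P u" "0 < w u * poly p u"
    using set_integral_eq_0_imp_pos_point[OF integrable orthogonal not_null P] by blast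
  obtain v where v: "v \<in> A" "P v" "w v * poly p v < 0"
    using set_integral_eq_0_imp_neg_point[OF integrable orthogonal not_null P] by blast
  have sign_change: "poly p u * poly p v < 0"
    using sign u v by (auto simp: zero_less_mult_iff mult_less_0_iff)
  then have "u \<noteq> v"
    by (metis not_square_less_zero)
  obtain r where "min u v < r" "r < max u v" "poly p r = 0"
  proof (cases "u < v")
    case True
    then show ?thesis using poly_IVT[of u v p] sign_change that by auto
  next
    case False
    with \<open>u \<noteq> v\<close> have "v < u" by simp
    then show ?thesis using poly_IVT[of v u p] sign_change that by (auto simp: mult.commute)
  qed
  with u v show ?thesis
    by (cases "u < v") auto
qed

lemma ae_ordered_interior_choice:
  fixes S :: "nat \<Rightarrow> 'a::linorder set"
  assumes ordered: "\<And>i j. i < j \<Longrightarrow> j < k \<Longrightarrow>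
       (AE x in M. x \<in> S i \<longrightarrow> (AE y in M. y \<in> S j \<longrightarrow> x < y))"
    and interior: "\<And>j P. j < k \<Longrightarrow> (AE x in M. x \<in> S j \<longrightarrow> P x) \<Longrightarrow>
       \<exists>r. R j r \<and> (\<exists>u\<in>S j. P u \<and> u < r) \<and> (\<exists>v\<in>S j. P v \<and> r < v)"
  shows "\<exists>r. (\<forall>j<k. R j (r j)) \<and> strict_mono_on {..<k} r"
proof -
  define below_later where "below_later x j \<longleftrightarrow>
      (\<forall>j'\<in>{j<..<k}. AE y in M. y \<in> S j' \<longrightarrow> x < y)" for x j
  have "\<exists>r. (\<forall>j<m. R j (r j) \<and> below_later (r j) j) \<and> (\<forall>i j. i < j \<longrightarrow> j < m \<longrightarrow> r i < r j)"
    if "m \<le> k" for m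
    using that
  proof (induction m)
    case 0
    show ?case by simp
  next
    case (Suc m)
    then obtain r where r: "\<forall>j<m. R j (r j) \<and> below_later (r j) j"
      and r_mono: "\<forall>i j. i < j \<longrightarrow> j < m \<longrightarrow> r i < r j"
      by auto
    have "m < k"
      using Suc.prems by simp
    have "\<forall>j'\<in>{m<..<k}. AE x in M. x \<in> S m \<longrightarrow> (AE y in M. y \<in> S j' \<longrightarrow> x < y)"
      using ordered by simp
    then have "AE x in M. x \<in> S m \<longrightarrow> below_later x m"
      unfolding below_later_def by (subst (asm) AE_ball_countable[symmetric]) auto
    moreover have "\<forall>i\<in>{..<m}. AE x in M. x \<in> S m \<longrightarrow> r i < x"
      using r \<open>m < k\<close> unfolding below_later_def by auto
    then have "AE x in M. x \<in> S m \<longrightarrow> (\<forall>i<m. r i < x)"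
      by (subst (asm) AE_ball_countable[symmetric]) auto
    ultimately have "AE x in M. x \<in> S m \<longrightarrow> below_later x m \<and> (\<forall>i<m. r i < x)"
      by eventually_elim auto
    from interior[OF \<open>m < k\<close> this] obtain s u v where s: "R m s"
      and u: "\<forall>i<m. r i < u" "u < s" and v: "below_later v m" "s < v"
      by blast
    have "below_later s m"
      unfolding below_later_def
    proof
      fix j' assume "j' \<in> {m<..<k}"
      with v(1) have "AE y in M. y \<in> S j' \<longrightarrow> v < y"
        unfolding below_later_def by blast
      then show "AE y in M. y \<in> S j' \<longrightarrow> s < y"
        by eventually_elim (use \<open>s < v\<close> in \<open>auto intro: less_trans\<close>)
    qed
    with r r_mono s u show ?case
      by (intro exI[of _ "r(m := s)"]) (auto simp: less_Suc_eq)
  qed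
  from this[of k] show ?thesis
    by (auto simp: strict_mono_on_def)
qed

lemma orthogonal_poly_increasing_roots:
  fixes q :: "real poly" and S :: "nat \<Rightarrow> real set" and w :: "real \<Rightarrow> real"
  assumes "q \<noteq> 0"
    and nonneg: "\<And>j. j < k \<Longrightarrow> S j \<subseteq> {0..}"
    and ordered: "\<And>i j. i < j \<Longrightarrow> j < k \<Longrightarrow>
       (AE x in lebesgue. x \<in> S i \<longrightarrow> (AE y in lebesgue. y \<in> S j \<longrightarrow> x < y))"
    and sign: "\<And>j. j < k \<Longrightarrow> (\<forall>x\<in>S j. w x \<ge> 0) \<or> (\<forall>x\<in>S j. w x \<le> 0)"
    and nonzero: "\<And>j. j < k \<Longrightarrow> (LINT x:S j|lebesgue. w x) \<noteq> 0"
    and integrable: "\<And>j. j < k \<Longrightarrow> set_integrable lebesgue (S j) (\<lambda>x. w x * poly q x)"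
    and orthogonal: "\<And>j. j < k \<Longrightarrow> (LINT x:S j|lebesgue. w x * poly q x) = 0"
  obtains r where "strict_mono_on {..<k} r" "\<And>j. j < k \<Longrightarrow> poly q (r j) = 0 \<and> 0 < r j"
proof (rule ae_ordered_interior_choice[OF ordered, where R = "\<lambda>j x. poly q x = 0 \<and> 0 < x", THEN exE])
  fix j P assume "j < k" "AE x in lebesgue. x \<in> S j \<longrightarrow> P x"
  from poly_root_between_points[OF \<open>q \<noteq> 0\<close> integrable orthogonal nonzero sign this(2)] \<open>j < k\<close>
  obtain s where "poly q s = 0" "\<exists>u\<in>S j. P u \<and> u < s" "\<exists>v\<in>S j. P v \<and> s < v"
    by blast
  moreover have "0 < s"
    using calculation(2) nonneg[OF \<open>j < k\<close>] by force
  ultimately show "\<exists>s. (poly q s = 0 \<and> 0 < s) \<and> (\<exists>u\<in>S j. P u \<and> u < s) \<and> (\<exists>v\<in>S j. P v \<and> s < v)"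
    by blast
qed (use that in blast)+

theorem lemmaB1:
  fixes k :: nat and S :: "nat \<Rightarrow> real set" and w :: "real \<Rightarrow> real"
  assumes meas: "\<And>j. j < k \<Longrightarrow> S j \<in> sets lebesgue"
    and nonneg: "\<And>j. j < k \<Longrightarrow> S j \<subseteq> {0..}"
    and pos: "\<And>j. j < k \<Longrightarrow> emeasure lebesgue (S j) > 0"
    and ordered: "\<And>i j. i < j \<Longrightarrow> j < k \<Longrightarrow>
       (AE x in lebesgue. x \<in> S i \<longrightarrow> (AE y in lebesgue. y \<in> S j \<longrightarrow> x < y))"
    and w_meas: "w \<in> borel_measurable lebesgue"
    and sign: "\<And>j. j < k \<Longrightarrow> (\<forall>x\<in>S j. w x \<ge> 0) \<or> (\<forall>x\<in>S j. w x \<le> 0)"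
    and integ: "\<And>i j. i < k \<Longrightarrow> j < k \<Longrightarrow>
       set_integrable lebesgue (S j) (\<lambda>x. w x * x ^ (2 * i))"
    and nonzero: "\<And>j. j < k \<Longrightarrow> (LINT x:S j|lebesgue. w x) \<noteq> 0"
  shows "det (mat k k (\<lambda>(i, j). LINT x:S j|lebesgue. w x * x ^ (2 * i))) \<noteq> 0"
proof
  assume "det (mat k k (\<lambda>(i, j). LINT x:S j|lebesgue. w x * x ^ (2 * i))) = 0"
  then obtain c i0 where c: "i0 < k" "c i0 \<noteq> 0"
    and moments: "\<And>j. j < k \<Longrightarrow> (\<Sum>i<k. c i * (LINT x:S j|lebesgue. w x * x ^ (2 * i))) = 0"
    by (rule det_eq_0_imp_rows_dependent) auto
  obtain p where "p \<noteq> 0" "degree p < k" and p_eq: "\<And>y. poly p y = (\<Sum>i<k. c i * y ^ i)"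
    using poly_from_coeffs[of i0 k c] c by blast
  define q where "q = pcompose p [:0, 0, 1:]"
  have q_eq: "poly q x = poly p (x ^ 2)" for x
    unfolding q_def by (simp add: poly_pcompose power2_eq_square)
  have "q \<noteq> 0"
    using \<open>p \<noteq> 0\<close> pcompose_eq_0[of p "[:0, 0, 1:]"] unfolding q_def by auto
  have expand: "w x * poly q x = (\<Sum>i<k. c i * (w x * x ^ (2 * i)))" for x
    unfolding q_eq p_eq power_mult by (simp add: sum_distrib_left mult_ac)
  obtain r where "strict_mono_on {..<k} r" and roots: "\<And>j. j < k \<Longrightarrow> poly q (r j) = 0 \<and> 0 < r j"
  proof (rule orthogonal_poly_increasing_roots[OF \<open>q \<noteq> 0\<close> nonneg ordered sign nonzero])
    show "set_integrable lebesgue (S j) (\<lambda>x. w x * poly q x)" if "j < k" for j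
      unfolding expand using integ that by (auto intro!: set_integrable_sum set_integrable_mult_right)
    show "(LINT x:S j|lebesgue. w x * poly q x) = 0" if "j < k" for j
      unfolding expand using integ that moments[OF that]
      by (subst set_integral_sum) (auto intro!: set_integrable_mult_right)
  qed (use that in blast)+
  have "strict_mono_on {..<k} (\<lambda>j. r j ^ 2)"
    using \<open>strict_mono_on {..<k} r\<close> roots
    by (intro strict_mono_onI power_strict_mono) (auto simp: strict_mono_on_def less_imp_le)
  then have "k \<le> degree p"
    using roots q_eq by (intro poly_inj_roots_le_degree[OF \<open>p \<noteq> 0\<close> strict_mono_on_imp_inj_on]) auto
  with \<open>degree p < k\<close> show False by simp
qed

end
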